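(* Let $N\ge2$ be an integer. For all $\sigma>0$ and all $x\in[1/N,1]$, \[\Bigl|\sum_{n=0}^\infty e^{-n/\sigma}\hat F^n\varphi_0(x)-S(\sigma)\Bigr|\le\frac{N(N-1)}{2},\qquad\text{where } S(\sigma):=\frac{1}{\log N}\sum_{n=0}^\infty e^{-n/\sigma}\lambda\bigl(F^{-n}[1/N,1]\bigr).\]
   Context: $\lambda$ is Lebesgue measure; $F$ is the Farey map, $F(x)=x/(1-x)$ for $0\le x\le1/2$, $F(x)=(1-x)/x$ for $1/2<x\le1$. $\hat F$ is the transfer operator of $F$ with respect to $d\mu=dx/x$, given by $\hat Ff(x)=\dfrac{f(x/(1+x))+x\,f(1/(1+x))}{1+x}$. $\varphi_0(x):=x$. *)

theory Defs
  imports "HOL-Analysis.Analysis"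
begin

definition farey :: "real \<Rightarrow> real" where
  "farey x = (if x \<le> 1/2 then x / (1 - x) else (1 - x) / x)"

text \<open>Transfer operator of the Farey map with respect to dx/x.\<close>
definition farey_transfer :: "(real \<Rightarrow> real) \<Rightarrow> (real \<Rightarrow> real)" where
  "farey_transfer f x = (f (x / (1 + x)) + x * f (1 / (1 + x))) / (1 + x)"

definition phi0 :: "real \<Rightarrow> real" where
  "phi0 x = x"

definition farey_preimage_measure :: "nat \<Rightarrow> nat \<Rightarrow> real" where
  "farey_preimage_measure N n =
     measure lborel {y \<in> {0..1}. (farey ^^ n) y \<in> {1 / real N..1}}"

definition S_sigma :: "nat \<Rightarrow> real \<Rightarrow> real" where
  "S_sigma N \<sigma> = (1 / ln (real N)) *
     (\<Sum>n. exp (- real n / \<sigma>) * farey_preimage_measure N n)"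

end

theory Submission
  imports Defs
begin

text \<open>
  Let \<open>\<phi>\<^sub>n\<close> be the \<open>n\<close>-th iterate of the transfer operator applied to \<open>\<phi>\<^sub>0\<close>. Then
  \<open>\<phi>\<^sub>n(x) = x P\<^sup>n1(x)\<close>, where \<open>P\<close> is the Perron--Frobenius operator of the Farey map for Lebesgue
  measure, so by duality \<open>\<lambda>(F\<^sup>-\<^sup>n[1/N,1])\<close> is the integral of \<open>\<phi>\<^sub>n(w)/w\<close> over \<open>[1/N,1]\<close>.
  The transfer operator preserves the cone of nondecreasing concave functions \<open>[0,1] \<rightarrow> [0,1]\<close>,
  so both \<open>\<phi>\<^sub>n(x)\<close> and \<open>\<lambda>(F\<^sup>-\<^sup>n[1/N,1]) / log N\<close> lie between \<open>\<phi>\<^sub>n(1/N)\<close> and \<open>\<phi>\<^sub>n(1)\<close>, and the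
  difference of the two series is at most \<open>D(N) = \<Sum>\<^sub>n q\<^sup>n (\<phi>\<^sub>n(1) - \<phi>\<^sub>n(1/N))\<close> with \<open>q = e\<^sup>-\<^sup>1\<^sup>/\<^sup>\<sigma>\<close>.
  The functional equations \<open>\<phi>\<^sub>n\<^sub>+\<^sub>1(1) = \<phi>\<^sub>n(1/2)\<close> and
  \<open>(k+1) \<phi>\<^sub>n\<^sub>+\<^sub>1(1/k) = k \<phi>\<^sub>n(1/(k+1)) + \<phi>\<^sub>n(k/(k+1))\<close> telescope to \<open>D(2) \<le> 1\<close> and
  \<open>k D(k+1) \<le> (k+1)/k + (k+1) D(k)\<close>, and induction on \<open>k\<close> gives \<open>D(N) \<le> N(N-1)/2\<close>.\<close>

section \<open>Concave functions of a real variable\<close>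

lemma concave_on_cong:
  assumes "\<And>x. x \<in> S \<Longrightarrow> f x = g x"
  shows "concave_on S f \<longleftrightarrow> concave_on S g"
  using assms by (auto simp: concave_on_iff convex_def)

lemma concave_on_subset: "concave_on T f \<Longrightarrow> S \<subseteq> T \<Longrightarrow> convex S \<Longrightarrow> concave_on S f"
  unfolding concave_on_def by (rule convex_on_subset)

lemma concave_on_compose_mono:
  fixes f g :: "real \<Rightarrow> real"
  assumes "concave_on S f" "concave_on T g" "mono_on T g" "f ` S \<subseteq> T"
  shows "concave_on S (\<lambda>x. g (f x))"
proof -
  have "convex S" "convex T"
    using assms(1,2) by (auto dest: concave_on_imp_convex)
  then show ?thesis
  proof (intro concave_on_linorderI)
    fix t x y :: real
    assume t: "0 < t" "t < 1" and xy: "x \<in> S" "y \<in> S" "x < y"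
    have fx: "f x \<in> T" "f y \<in> T" and fxy: "f ((1 - t) * x + t * y) \<in> T"
      using assms(4) xy t \<open>convex S\<close> by (auto simp: convex_alt)
    have mid: "(1 - t) * f x + t * f y \<in> T"
      using fx t \<open>convex T\<close> by (simp add: convex_alt)
    have "(1 - t) * g (f x) + t * g (f y) \<le> g ((1 - t) * f x + t * f y)"
      using concave_onD[OF assms(2), of t "f x" "f y"] fx t by simp
    also have "\<dots> \<le> g (f ((1 - t) * x + t * y))"
      using concave_onD[OF assms(1), of t x y] xy t mid fxy
      by (intro mono_onD[OF assms(3)]) auto
    finally show "(1 - t) * g (f x) + t * g (f y) \<le> g (f ((1 - t) *\<^sub>R x + t *\<^sub>R y))"
      by simp
  qed
qed

lemma concave_on_reflect:
  fixes g :: "real \<Rightarrow> real"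
  assumes "concave_on {a..b} g"
  shows "concave_on {a..b} (\<lambda>t. g (a + b - t))"
proof (intro concave_on_linorderI)
  fix t x y :: real
  assume "0 < t" "t < 1" "x \<in> {a..b}" "y \<in> {a..b}"
  moreover have "a + b - ((1 - t) * x + t * y) = (1 - t) * (a + b - x) + t * (a + b - y)"
    by (simp add: algebra_simps)
  ultimately show "(1 - t) * g (a + b - x) + t * g (a + b - y) \<le> g (a + b - ((1 - t) *\<^sub>R x + t *\<^sub>R y))"
    using concave_onD[OF assms, of t "a + b - x" "a + b - y"] by simp
qed simp

lemma mono_on_concave_symmetric:
  fixes G :: "real \<Rightarrow> real"
  assumes "concave_on {0..1} G" and symm: "\<And>t. t \<in> {0..1} \<Longrightarrow> G (1 - t) = G t"
  shows "mono_on {0..1/2} G"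
proof (intro mono_onI)
  fix s t :: real
  assume "s \<in> {0..1/2}" "t \<in> {0..1/2}" "s \<le> t"
  then consider "s = 1/2" | "0 \<le> s" "s < 1/2" "s \<le> t" "t \<le> 1/2"
    by fastforce
  then show "G s \<le> G t"
  proof cases
    case 1
    with \<open>s \<le> t\<close> \<open>t \<in> {0..1/2}\<close> have "t = s"
      by simp
    then show ?thesis
      by simp
  next
    case 2
    define u where "u = (t - s) / (1 - 2 * s)"
    \<comment> \<open>\<open>t\<close> lies between \<open>s\<close> and its mirror image \<open>1 - s\<close>\<close>
    have u: "0 \<le> u" "u \<le> 1" and "u * (1 - 2 * s) = t - s"
      using 2 by (auto simp: u_def field_simps)
    then have t_eq: "(1 - u) * s + u * (1 - s) = t"
      by (simp add: algebra_simps)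
    have "(1 - u) * G s + u * G (1 - s) \<le> G ((1 - u) * s + u * (1 - s))"
      using concave_onD[OF assms(1), of u s "1 - s"] u 2 by simp
    then show ?thesis
      using symm[of s] 2 t_eq by (simp add: algebra_simps)
  qed
qed

lemma concave_on_div_one_plus: "concave_on {0..} (\<lambda>x::real. x / (1 + x))"
proof (rule f''_le0_imp_concave)
  show "((\<lambda>x. x / (1 + x)) has_real_derivative 1 / (1 + x)\<^sup>2) (at x)" if "x \<in> {0..}" for x :: real
    using that by (auto intro!: derivative_eq_intros simp: field_simps power2_eq_square)
  show "((\<lambda>x. 1 / (1 + x)\<^sup>2) has_real_derivative - 2 / (1 + x) ^ 3) (at x)" if "x \<in> {0..}" for x :: real
  proof -
    have "((\<lambda>x. 1 / (1 + x)\<^sup>2) has_real_derivative - (2 * (1 + x)) / ((1 + x)\<^sup>2)\<^sup>2) (at x)"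
      using that by (auto intro!: derivative_eq_intros)
    moreover have "- (2 * (1 + x)) / ((1 + x)\<^sup>2)\<^sup>2 = - 2 / (1 + x) ^ 3"
      using that by (simp add: divide_simps power2_eq_square power3_eq_cube add_nonneg_eq_0_iff)
    ultimately show ?thesis
      by simp
  qed
qed auto

section \<open>Geometrically weighted series\<close>

lemma summable_power_mult_bounded:
  fixes q :: real
  assumes "0 \<le> q" "q < 1" and "\<And>n. \<bar>a n\<bar> \<le> C"
  shows "summable (\<lambda>n. q ^ n * a n)"
proof (rule summable_comparison_test)
  show "\<exists>N. \<forall>n\<ge>N. norm (q ^ n * a n) \<le> C * q ^ n"
    using assms by (auto simp: abs_mult mult.commute intro!: mult_right_mono)
  show "summable (\<lambda>n. C * q ^ n)"
    using assms by (intro summable_mult summable_geometric) auto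
qed

lemma power_mult_telescope:
  fixes q :: real
  assumes q: "0 \<le> q" "q < 1" and a: "\<And>n. a n \<in> {0..1}"
  shows "summable (\<lambda>n. q ^ n * (a n - a (Suc n)))"
    and "(\<Sum>n. q ^ n * (a n - a (Suc n))) \<le> a 0"
proof -
  have bounded: "\<bar>a n\<bar> \<le> 1" for n
    using a[of n] by auto
  have s: "summable (\<lambda>n. q ^ n * a n)" and s_Suc: "summable (\<lambda>n. q ^ n * a (Suc n))"
    by (rule summable_power_mult_bounded[OF q bounded])+
  then show "summable (\<lambda>n. q ^ n * (a n - a (Suc n)))"
    unfolding right_diff_distrib by (rule summable_diff)
  \<comment> \<open>the shifted series reappears scaled by \<open>q \<le> 1\<close>, so the difference is at most the head term\<close>
  have "(\<Sum>n. q ^ n * a n) = a 0 + q * (\<Sum>n. q ^ n * a (Suc n))"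
    using suminf_split_head[OF s] suminf_mult[OF s_Suc, of q] by (simp add: mult.assoc)
  moreover have "0 \<le> (\<Sum>n. q ^ n * a (Suc n))"
    using s_Suc q a by (intro suminf_nonneg) auto
  moreover have "(\<Sum>n. q ^ n * (a n - a (Suc n))) = (\<Sum>n. q ^ n * a n) - (\<Sum>n. q ^ n * a (Suc n))"
    using suminf_diff[OF s s_Suc] by (simp add: right_diff_distrib)
  ultimately show "(\<Sum>n. q ^ n * (a n - a (Suc n))) \<le> a 0"
    using q by (simp add: mult_left_le_one_le)
qed

lemma abs_suminf_power_mult_diff_le:
  fixes q :: real
  assumes q: "0 \<le> q" "q < 1"
    and bounds: "\<And>n. 0 \<le> l n \<and> l n \<le> a n \<and> a n \<le> u n \<and> u n \<le> 1"
      "\<And>n. l n \<le> b n \<and> b n \<le> u n"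
  shows "\<bar>(\<Sum>n. q ^ n * a n) - (\<Sum>n. q ^ n * b n)\<bar> \<le> (\<Sum>n. q ^ n * (u n - l n))"
proof -
  have bounded: "\<bar>a n\<bar> \<le> 1" "\<bar>b n\<bar> \<le> 1" "\<bar>u n - l n\<bar> \<le> 1" for n
    using bounds[of n] by auto
  have s: "summable (\<lambda>n. q ^ n * a n)" "summable (\<lambda>n. q ^ n * b n)" "summable (\<lambda>n. q ^ n * (u n - l n))"
    by (rule summable_power_mult_bounded[OF q bounded(1)] summable_power_mult_bounded[OF q bounded(2)]
        summable_power_mult_bounded[OF q bounded(3)])+
  have "\<bar>q ^ n * a n - q ^ n * b n\<bar> \<le> q ^ n * (u n - l n)" for n
    using bounds[of n] q by (auto simp: abs_mult simp flip: right_diff_distrib intro!: mult_left_mono)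
  then have "\<bar>\<Sum>n. q ^ n * a n - q ^ n * b n\<bar> \<le> (\<Sum>n. q ^ n * (u n - l n))"
    using norm_suminf_le[where 'a = real] s(3) by (simp add: real_norm_def)
  then show ?thesis
    using suminf_diff[OF s(1,2)] by simp
qed

section \<open>The Perron--Frobenius operator of the Farey map\<close>

lemma farey_borel_measurable [measurable]: "farey \<in> borel_measurable borel"
  unfolding farey_def by measurable

text \<open>Perron--Frobenius operator of the Farey map with respect to Lebesgue measure.\<close>
definition farey_pf :: "(real \<Rightarrow> real) \<Rightarrow> real \<Rightarrow> real" where
  "farey_pf r w = (r (w / (1 + w)) + r (1 / (1 + w))) / (1 + w)\<^sup>2"

lemma farey_pf_borel_measurable [measurable]:
  assumes [measurable]: "r \<in> borel_measurable borel"
  shows "farey_pf r \<in> borel_measurable borel"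
  unfolding farey_pf_def by measurable

lemma farey_pf_nonneg:
  assumes "\<And>y. y \<in> {0..1} \<Longrightarrow> 0 \<le> r y" and "w \<in> {0..1}"
  shows "0 \<le> farey_pf r w"
proof -
  have "w / (1 + w) \<in> {0..1}" "1 / (1 + w) \<in> {0..1}"
    using assms(2) by (auto simp: field_simps)
  then show ?thesis
    using assms unfolding farey_pf_def by auto
qed

lemma ennreal_farey_pf:
  assumes "\<And>y. y \<in> {0..1} \<Longrightarrow> 0 \<le> r y" and "w \<in> {0..1}"
  shows "ennreal (farey_pf r w)
       = (ennreal (r (w / (1 + w))) + ennreal (r (1 / (1 + w)))) * ennreal (1 / (1 + w)\<^sup>2)"
proof -
  have "0 \<le> r (w / (1 + w))" "0 \<le> r (1 / (1 + w))"
    using assms by (auto simp: field_simps)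
  with assms(2) show ?thesis
    unfolding farey_pf_def by (simp add: ennreal_mult' ennreal_plus[symmetric] divide_inverse del: ennreal_plus)
qed

lemma nn_integral_farey_left_branch:
  fixes f :: "real \<Rightarrow> ennreal"
  assumes [measurable]: "f \<in> borel_measurable borel"
  shows "(\<integral>\<^sup>+z. f z * indicator {0..1/2} z \<partial>lborel)
       = (\<integral>\<^sup>+w. f (w / (1 + w)) * ennreal (1 / (1 + w)\<^sup>2) * indicator {0..1} w \<partial>lborel)"
proof -
  have "(\<integral>\<^sup>+z. f z * indicator {0..1/2} z \<partial>lborel)
      = (\<integral>\<^sup>+z. f z * indicator {(\<lambda>w::real. w / (1 + w)) 0..(\<lambda>w. w / (1 + w)) 1} z \<partial>lborel)"
    by simp
  also have "\<dots> = (\<integral>\<^sup>+w. f (w / (1 + w)) * ennreal (1 / (1 + w)\<^sup>2) * indicator {0..1} w \<partial>lborel)"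
  proof (rule nn_integral_substitution_aux)
    show "((\<lambda>w. w / (1 + w)) has_real_derivative 1 / (1 + x)\<^sup>2) (at x)" if "x \<in> {0..1}" for x :: real
      using that by (auto intro!: derivative_eq_intros simp: field_simps power2_eq_square)
  qed (auto intro!: continuous_intros)
  finally show ?thesis .
qed

lemma nn_integral_farey_right_branch:
  fixes f :: "real \<Rightarrow> ennreal"
  assumes [measurable]: "f \<in> borel_measurable borel"
  shows "(\<integral>\<^sup>+z. f z * indicator {1/2..1} z \<partial>lborel)
       = (\<integral>\<^sup>+w. f (1 / (1 + w)) * ennreal (1 / (1 + w)\<^sup>2) * indicator {0..1} w \<partial>lborel)"
proof -
  \<comment> \<open>the branch is decreasing: substitute the increasing map \<open>u \<mapsto> 1/(2 - u)\<close>, then reflect \<open>u = 1 - w\<close>\<close>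
  have "(\<integral>\<^sup>+z. f z * indicator {1/2..1} z \<partial>lborel)
      = (\<integral>\<^sup>+z. f z * indicator {(\<lambda>u::real. 1 / (2 - u)) 0..(\<lambda>u. 1 / (2 - u)) 1} z \<partial>lborel)"
    by simp
  also have "\<dots> = (\<integral>\<^sup>+u. f (1 / (2 - u)) * ennreal (1 / (2 - u)\<^sup>2) * indicator {0..1} u \<partial>lborel)"
  proof (rule nn_integral_substitution_aux)
    show "((\<lambda>u. 1 / (2 - u)) has_real_derivative 1 / (2 - x)\<^sup>2) (at x)" if "x \<in> {0..1}" for x :: real
      using that by (auto intro!: derivative_eq_intros simp: field_simps power2_eq_square)
  qed (auto intro!: continuous_intros)
  also have "\<dots> = (\<integral>\<^sup>+w. f (1 / (2 - (1 + (-1) * w))) * ennreal (1 / (2 - (1 + (-1) * w))\<^sup>2)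
                        * indicator {0..1} (1 + (-1) * w) \<partial>lborel)"
    by (subst nn_integral_real_affine[where c = "-1" and t = 1]) auto
  also have "\<dots> = (\<integral>\<^sup>+w. f (1 / (1 + w)) * ennreal (1 / (1 + w)\<^sup>2) * indicator {0..1} w \<partial>lborel)"
    by (intro nn_integral_cong) (auto split: split_indicator)
  finally show ?thesis .
qed

lemma nn_integral_farey_pf:
  fixes G :: "real \<Rightarrow> ennreal"
  assumes [measurable]: "r \<in> borel_measurable borel" "G \<in> borel_measurable borel"
    and r_nonneg: "\<And>y. y \<in> {0..1} \<Longrightarrow> 0 \<le> r y"
  shows "(\<integral>\<^sup>+z. indicator {0..1} z * ennreal (r z) * G (farey z) \<partial>lborel)
       = (\<integral>\<^sup>+w. indicator {0..1} w * ennreal (farey_pf r w) * G w \<partial>lborel)"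
proof -
  define f where "f z = ennreal (r z) * G (farey z)" for z
  define branches where "branches w =
    ennreal (r (w / (1 + w))) * G w * ennreal (1 / (1 + w)\<^sup>2) * indicator {0..1} w +
    ennreal (r (1 / (1 + w))) * G w * ennreal (1 / (1 + w)\<^sup>2) * indicator {0..1} w" for w
  have [measurable]: "f \<in> borel_measurable borel"
    unfolding f_def by measurable
  have left: "farey (w / (1 + w)) = w" and right: "farey (1 / (1 + w)) = w" if "w \<in> {0..1}" for w
    using that by (auto simp: farey_def field_simps)
  have "(\<integral>\<^sup>+z. indicator {0..1} z * ennreal (r z) * G (farey z) \<partial>lborel)
      = (\<integral>\<^sup>+z. f z * indicator {0..1/2} z + f z * indicator {1/2..1} z \<partial>lborel)"
    by (rule nn_integral_cong_AE, use AE_lborel_singleton[of "1/2"] in eventually_elim)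
       (auto simp: f_def split: split_indicator)
  also have "\<dots> = (\<integral>\<^sup>+z. f z * indicator {0..1/2} z \<partial>lborel) + (\<integral>\<^sup>+z. f z * indicator {1/2..1} z \<partial>lborel)"
    by (rule nn_integral_add) auto
  also have "\<dots> = (\<integral>\<^sup>+w. f (w / (1 + w)) * ennreal (1 / (1 + w)\<^sup>2) * indicator {0..1} w \<partial>lborel)
                   + (\<integral>\<^sup>+w. f (1 / (1 + w)) * ennreal (1 / (1 + w)\<^sup>2) * indicator {0..1} w \<partial>lborel)"
    by (simp only: nn_integral_farey_left_branch nn_integral_farey_right_branch \<open>f \<in> borel_measurable borel\<close>)
  also have "\<dots> = (\<integral>\<^sup>+w. ennreal (r (w / (1 + w))) * G w * ennreal (1 / (1 + w)\<^sup>2) * indicator {0..1} w \<partial>lborel)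
                   + (\<integral>\<^sup>+w. ennreal (r (1 / (1 + w))) * G w * ennreal (1 / (1 + w)\<^sup>2) * indicator {0..1} w \<partial>lborel)"
    by (intro arg_cong2[where f = "(+)"] nn_integral_cong) (auto simp: f_def left right split: split_indicator)
  also have "\<dots> = (\<integral>\<^sup>+w. branches w \<partial>lborel)"
    unfolding branches_def by (rule nn_integral_add[symmetric]) auto
  also have "\<dots> = (\<integral>\<^sup>+w. indicator {0..1} w * ennreal (farey_pf r w) * G w \<partial>lborel)"
    using ennreal_farey_pf[OF r_nonneg]
    by (intro nn_integral_cong) (auto simp: branches_def algebra_simps split: split_indicator)
  finally show ?thesis .
qed

lemma nn_integral_farey_pf_funpow:
  fixes G :: "real \<Rightarrow> ennreal"
  assumes [measurable]: "r \<in> borel_measurable borel" "G \<in> borel_measurable borel"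
    and r_nonneg: "\<And>y. y \<in> {0..1} \<Longrightarrow> 0 \<le> r y"
  shows "(\<integral>\<^sup>+z. indicator {0..1} z * ennreal (r z) * G ((farey ^^ n) z) \<partial>lborel)
       = (\<integral>\<^sup>+w. indicator {0..1} w * ennreal ((farey_pf ^^ n) r w) * G w \<partial>lborel)"
  using assms(2)
proof (induction n arbitrary: G)
  case (Suc n)
  have [measurable]: "(farey_pf ^^ n) r \<in> borel_measurable borel"
    by (induction n) auto
  have nonneg: "0 \<le> (farey_pf ^^ n) r y" if "y \<in> {0..1}" for y
    using that by (induction n arbitrary: y) (auto intro: farey_pf_nonneg r_nonneg)
  have "(\<integral>\<^sup>+z. indicator {0..1} z * ennreal (r z) * (G \<circ> farey) ((farey ^^ n) z) \<partial>lborel)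
      = (\<integral>\<^sup>+w. indicator {0..1} w * ennreal ((farey_pf ^^ n) r w) * G (farey w) \<partial>lborel)"
    using Suc by (subst Suc.IH) auto
  also have "\<dots> = (\<integral>\<^sup>+w. indicator {0..1} w * ennreal (farey_pf ((farey_pf ^^ n) r) w) * G w \<partial>lborel)"
    using Suc.prems by (intro nn_integral_farey_pf nonneg) auto
  finally show ?case
    by simp
qed simp

lemma farey_transfer_mult_id: "farey_transfer (\<lambda>y. y * r y) x = x * farey_pf r x"
proof (cases "1 + x = 0")
  case False
  then show ?thesis
    unfolding farey_transfer_def farey_pf_def
    by (simp add: divide_simps power2_eq_square) (simp add: algebra_simps)
qed (simp add: farey_transfer_def farey_pf_def)

lemma farey_transfer_funpow_phi0: "(farey_transfer ^^ n) phi0 x = x * (farey_pf ^^ n) (\<lambda>_. 1) x"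
proof (induction n arbitrary: x)
  case (Suc n)
  then have "(farey_transfer ^^ n) phi0 = (\<lambda>y. y * (farey_pf ^^ n) (\<lambda>_. 1) y)"
    by auto
  then show ?case
    by (simp add: farey_transfer_mult_id)
qed (simp add: phi0_def)

section \<open>An invariant cone of the transfer operator\<close>

definition concave_profile :: "(real \<Rightarrow> real) \<Rightarrow> bool" where
  "concave_profile h \<longleftrightarrow> h \<in> {0..1} \<rightarrow> {0..1} \<and> mono_on {0..1} h \<and> concave_on {0..1} h"

lemma concave_profile_phi0: "concave_profile phi0"
proof -
  have phi0_eq: "phi0 = (\<lambda>x. x)"
    by (simp add: fun_eq_iff phi0_def)
  show ?thesis
    unfolding concave_profile_def phi0_eq by (auto simp: concave_on_ident intro: mono_onI)
qed

definition symmetrise :: "(real \<Rightarrow> real) \<Rightarrow> real \<Rightarrow> real" where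
  "symmetrise h t = h t * (1 - t) + h (1 - t) * t"

lemma farey_transfer_eq_symmetrise:
  assumes "0 \<le> x"
  shows "farey_transfer h x = symmetrise h (x / (1 + x))"
proof -
  have "1 - x / (1 + x) = 1 / (1 + x)"
    using assms by (simp add: field_simps)
  then show ?thesis
    by (simp add: symmetrise_def farey_transfer_def add_divide_distrib)
qed

lemma symmetrise_range:
  assumes "concave_profile h" "t \<in> {0..1}"
  shows "symmetrise h t \<in> {0..1}"
proof -
  have "h t \<in> {0..1}" "h (1 - t) \<in> {0..1}"
    using assms by (auto simp: concave_profile_def)
  then have "0 \<le> h t * (1 - t)" "h t * (1 - t) \<le> 1 - t" "0 \<le> h (1 - t) * t" "h (1 - t) * t \<le> t"
    using assms(2) by (simp_all add: mult_left_le_one_le)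
  then show ?thesis
    unfolding symmetrise_def by simp
qed

lemma concave_on_symmetrise:
  assumes "concave_profile h"
  shows "concave_on {0..1} (symmetrise h)"
proof -
  define g where "g u = h u * (1 - u)" for u
  have "concave_on {0..1} (\<lambda>u. 1 - u)"
    by (intro concave_on_diff) (auto simp: concave_on_const convex_on_ident)
  moreover have "antimono_on {0..1} (\<lambda>u::real. 1 - u)"
    by (auto simp: monotone_on_def)
  ultimately have "concave_on {0..1} g"
    unfolding g_def using assms by (intro concave_on_mul) (auto simp: concave_profile_def)
  then have "concave_on {0..1} (\<lambda>t. g t + g (1 - t))"
    using concave_on_reflect[of 0 1 g] by (intro concave_on_add) auto
  moreover have "symmetrise h = (\<lambda>t. g t + g (1 - t))"
    by (simp add: fun_eq_iff symmetrise_def g_def)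
  ultimately show ?thesis
    by simp
qed

lemma mono_on_symmetrise:
  assumes "concave_profile h"
  shows "mono_on {0..1/2} (symmetrise h)"
  by (rule mono_on_concave_symmetric[OF concave_on_symmetrise[OF assms]]) (simp add: symmetrise_def)

lemma concave_profile_farey_transfer:
  assumes "concave_profile h"
  shows "concave_profile (farey_transfer h)"
proof -
  have branch_range: "x / (1 + x) \<in> {0..1/2}" if "x \<in> {0..1}" for x :: real
    using that by (auto simp: field_simps)
  have branch_mono: "x / (1 + x) \<le> y / (1 + y)" if "x \<in> {0..1}" "y \<in> {0..1}" "x \<le> y" for x y :: real
    using that by (simp add: field_simps)
  have "farey_transfer h x \<in> {0..1}" if "x \<in> {0..1}" for x
  proof -
    have "x / (1 + x) \<in> {0..1}"
      using that by (auto simp: field_simps)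
    then have "symmetrise h (x / (1 + x)) \<in> {0..1}"
      by (rule symmetrise_range[OF assms])
    then show ?thesis
      using that by (simp add: farey_transfer_eq_symmetrise)
  qed
  moreover have "mono_on {0..1} (farey_transfer h)"
  proof (rule mono_onI)
    fix x y :: real
    assume xy: "x \<in> {0..1}" "y \<in> {0..1}" "x \<le> y"
    then have "symmetrise h (x / (1 + x)) \<le> symmetrise h (y / (1 + y))"
      by (intro mono_onD[OF mono_on_symmetrise[OF assms]] branch_range branch_mono)
    then show "farey_transfer h x \<le> farey_transfer h y"
      using xy by (simp add: farey_transfer_eq_symmetrise)
  qed
  moreover have "concave_on {0..1} (farey_transfer h)"
  proof -
    have "concave_on {0..1} (\<lambda>x::real. x / (1 + x))"
      using concave_on_div_one_plus by (rule concave_on_subset) auto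
    moreover have "concave_on {0..1/2} (symmetrise h)"
      using concave_on_symmetrise[OF assms] by (rule concave_on_subset) auto
    ultimately have "concave_on {0..1} (\<lambda>x. symmetrise h (x / (1 + x)))"
      using mono_on_symmetrise[OF assms] by (rule concave_on_compose_mono) (use branch_range in blast)
    then show ?thesis
      by (subst concave_on_cong[where g = "\<lambda>x. symmetrise h (x / (1 + x))"])
         (auto simp: farey_transfer_eq_symmetrise)
  qed
  ultimately show ?thesis
    unfolding concave_profile_def by auto
qed

abbreviation farey_phi :: "nat \<Rightarrow> real \<Rightarrow> real" where
  "farey_phi n \<equiv> (farey_transfer ^^ n) phi0"

lemma concave_profile_farey_phi: "concave_profile (farey_phi n)"
  by (induction n) (simp_all add: concave_profile_phi0 concave_profile_farey_transfer)

lemma farey_phi_range: "x \<in> {0..1} \<Longrightarrow> farey_phi n x \<in> {0..1}"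
  using concave_profile_farey_phi[of n] by (auto simp: concave_profile_def)

lemma farey_phi_mono: "x \<in> {0..1} \<Longrightarrow> y \<in> {0..1} \<Longrightarrow> x \<le> y \<Longrightarrow> farey_phi n x \<le> farey_phi n y"
  using concave_profile_farey_phi[of n] by (auto simp: concave_profile_def intro: mono_onD)

section \<open>Measure of the preimages\<close>

lemma nn_integral_inverse_Icc:
  assumes "0 < a" "a \<le> 1"
  shows "(\<integral>\<^sup>+w. ennreal (indicator {a..1} w / w) \<partial>lborel) = ennreal (- ln a)"
proof -
  have "((\<lambda>w. 1 / w) has_integral (ln 1 - ln a)) {a..1}"
  proof (rule fundamental_theorem_of_calculus)
    show "(ln has_vector_derivative 1 / w) (at w within {a..1})" if "w \<in> {a..1}" for w
      using that assms by (auto intro!: derivative_eq_intros simp flip: has_real_derivative_iff_has_vector_derivative)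
  qed (use assms in auto)
  then have "((\<lambda>w. 1 / w) has_integral - ln a) {a..1}"
    by simp
  then have "(\<integral>\<^sup>+w. ennreal (indicator {a..1} w * (1 / w)) \<partial>lborel) = ennreal (- ln a)"
    using assms by (intro nn_integral_has_integral_lebesgue) auto
  then show ?thesis
    by simp
qed

lemma emeasure_farey_preimage:
  assumes "0 < a"
  shows "emeasure lborel {y \<in> {0..1}. (farey ^^ n) y \<in> {a..1}}
       = (\<integral>\<^sup>+w. ennreal (indicator {a..1} w * farey_phi n w / w) \<partial>lborel)"
proof -
  have [measurable]: "(farey ^^ n) \<in> borel_measurable borel"
    by (induction n) auto
  have "emeasure lborel {y \<in> {0..1}. (farey ^^ n) y \<in> {a..1}}
      = (\<integral>\<^sup>+y. indicator {y \<in> {0..1}. (farey ^^ n) y \<in> {a..1}} y \<partial>lborel)"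
    by simp
  also have "\<dots> = (\<integral>\<^sup>+y. indicator {0..1} y * ennreal 1 * indicator {a..1} ((farey ^^ n) y) \<partial>lborel)"
    by (intro nn_integral_cong) (simp split: split_indicator)
  also have "\<dots> = (\<integral>\<^sup>+w. indicator {0..1} w * ennreal ((farey_pf ^^ n) (\<lambda>_. 1) w) * indicator {a..1} w \<partial>lborel)"
    by (rule nn_integral_farey_pf_funpow) auto
  also have "\<dots> = (\<integral>\<^sup>+w. ennreal (indicator {a..1} w * farey_phi n w / w) \<partial>lborel)"
    using assms by (intro nn_integral_cong) (auto simp: farey_transfer_funpow_phi0 split: split_indicator)
  finally show ?thesis .
qed

lemma measure_farey_preimage_bounds:
  assumes "0 < a" "a \<le> 1"
  shows "- ln a * farey_phi n a \<le> measure lborel {y \<in> {0..1}. (farey ^^ n) y \<in> {a..1}}"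
    and "measure lborel {y \<in> {0..1}. (farey ^^ n) y \<in> {a..1}} \<le> - ln a * farey_phi n 1"
proof -
  define M where "M = emeasure lborel {y \<in> {0..1}. (farey ^^ n) y \<in> {a..1}}"
  have scaled: "(\<integral>\<^sup>+w. ennreal (c * (indicator {a..1} w / w)) \<partial>lborel) = ennreal (- ln a * c)"
    if "0 \<le> c" for c
  proof -
    have "(\<integral>\<^sup>+w. ennreal (c * (indicator {a..1} w / w)) \<partial>lborel)
        = ennreal c * (\<integral>\<^sup>+w. ennreal (indicator {a..1} w / w) \<partial>lborel)"
      using that by (simp only: ennreal_mult') (rule nn_integral_cmult, measurable)
    also have "\<dots> = ennreal (- ln a * c)"
      using that assms by (simp add: nn_integral_inverse_Icc ennreal_mult'[symmetric] mult.commute)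
    finally show ?thesis .
  qed
  have bounds: "farey_phi n a \<in> {0..1}" "farey_phi n 1 \<in> {0..1}"
    using assms farey_phi_range[of a n] farey_phi_range[of 1 n] by auto
  have "0 \<le> - ln a"
    using assms by simp
  have "M \<le> (\<integral>\<^sup>+w. ennreal (farey_phi n 1 * (indicator {a..1} w / w)) \<partial>lborel)"
    unfolding M_def emeasure_farey_preimage[OF assms(1)]
    using assms farey_phi_mono[of _ 1 n]
    by (intro nn_integral_mono ennreal_leI) (auto split: split_indicator intro: divide_right_mono)
  then have upper: "M \<le> ennreal (- ln a * farey_phi n 1)"
    using scaled bounds by simp
  have "(\<integral>\<^sup>+w. ennreal (farey_phi n a * (indicator {a..1} w / w)) \<partial>lborel) \<le> M"
    unfolding M_def emeasure_farey_preimage[OF assms(1)]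
    using assms farey_phi_mono[of a _ n]
    by (intro nn_integral_mono ennreal_leI) (auto split: split_indicator intro: divide_right_mono)
  then have lower: "ennreal (- ln a * farey_phi n a) \<le> M"
    using scaled bounds by simp
  have M_eq: "M = ennreal (measure lborel {y \<in> {0..1}. (farey ^^ n) y \<in> {a..1}})"
    using upper unfolding M_def by (intro emeasure_eq_ennreal_measure) (auto simp: top_unique)
  show "- ln a * farey_phi n a \<le> measure lborel {y \<in> {0..1}. (farey ^^ n) y \<in> {a..1}}"
    using lower unfolding M_eq by (simp add: ennreal_le_iff)
  have "0 \<le> - ln a * farey_phi n 1"
    using bounds \<open>0 \<le> - ln a\<close> by (simp add: mult_nonpos_nonneg)
  then show "measure lborel {y \<in> {0..1}. (farey ^^ n) y \<in> {a..1}} \<le> - ln a * farey_phi n 1"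
    using upper unfolding M_eq by (simp only: ennreal_le_iff)
qed

lemma farey_preimage_measure_bounds:
  assumes "2 \<le> N"
  shows "farey_phi n (1 / real N) \<le> farey_preimage_measure N n / ln (real N)"
    and "farey_preimage_measure N n / ln (real N) \<le> farey_phi n 1"
proof -
  have N: "0 < 1 / real N" "1 / real N \<le> 1" "0 < ln (real N)" "- ln (1 / real N) = ln (real N)"
    using assms by (simp_all add: ln_div)
  then show "farey_phi n (1 / real N) \<le> farey_preimage_measure N n / ln (real N)"
    and "farey_preimage_measure N n / ln (real N) \<le> farey_phi n 1"
    using measure_farey_preimage_bounds[OF N(1,2), of n]
    by (simp_all add: farey_preimage_measure_def field_simps)
qed

lemma S_sigma_eq_suminf:
  assumes "2 \<le> N" "0 < \<sigma>"
  shows "S_sigma N \<sigma> = (\<Sum>n. exp (- 1 / \<sigma>) ^ n * (farey_preimage_measure N n / ln (real N)))"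
proof -
  define q where "q = exp (- 1 / \<sigma>)"
  have q: "0 \<le> q" "q < 1"
    using assms(2) by (auto simp: q_def)
  have "1 / real N \<in> {0..1}"
    using assms(1) by simp
  then have "\<bar>farey_preimage_measure N n / ln (real N)\<bar> \<le> 1" for n
    using farey_preimage_measure_bounds[OF assms(1), of n] farey_phi_range[of "1 / real N" n]
      farey_phi_range[of 1 n] by auto
  then have "summable (\<lambda>n. ln (real N) * (q ^ n * (farey_preimage_measure N n / ln (real N))))"
    by (intro summable_mult summable_power_mult_bounded[OF q])
  then have "summable (\<lambda>n. q ^ n * farey_preimage_measure N n)"
    using assms(1) by simp
  moreover have "exp (- real n / \<sigma>) = q ^ n" for n
    unfolding q_def by (simp flip: exp_of_nat_mult)
  ultimately show ?thesis
    unfolding S_sigma_def q_def[symmetric] by (simp add: suminf_divide)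
qed

section \<open>The gap series\<close>

lemma farey_transfer_at_one: "farey_transfer h 1 = h (1 / 2)"
  by (simp add: farey_transfer_def)

lemma farey_transfer_at_inverse:
  fixes k :: real
  assumes "0 < k"
  shows "(k + 1) * farey_transfer h (1 / k) = k * h (1 / (k + 1)) + h (k / (k + 1))"
proof -
  define A where "A = h (1 / (k + 1))"
  define B where "B = h (k / (k + 1))"
  have "(1 / k) / (1 + 1 / k) = 1 / (k + 1)" "1 / (1 + 1 / k) = k / (k + 1)"
    using assms by (simp_all add: field_simps)
  then have "farey_transfer h (1 / k) = (A + 1 / k * B) / (1 + 1 / k)"
    unfolding farey_transfer_def A_def B_def by simp
  moreover have "1 + 1 / k = (k + 1) / k" "A + 1 / k * B = (k * A + B) / k"
    using assms by (simp_all add: field_simps)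
  ultimately show ?thesis
    using assms unfolding A_def[symmetric] B_def[symmetric] by simp
qed

lemma farey_phi_Suc_at_inverse_le:
  fixes k :: real
  assumes "1 \<le> k"
  shows "(k + 1) * farey_phi (Suc n) (1 / k) \<le> k * farey_phi n (1 / (k + 1)) + farey_phi n 1"
proof -
  have "farey_phi n (k / (k + 1)) \<le> farey_phi n 1"
    using assms by (intro farey_phi_mono) auto
  then show ?thesis
    using assms by (simp add: farey_transfer_at_inverse)
qed

definition farey_gap :: "real \<Rightarrow> real \<Rightarrow> real" where
  "farey_gap q k = (\<Sum>n. q ^ n * (farey_phi n 1 - farey_phi n (1 / k)))"

lemma summable_power_mult_farey_phi_diff:
  fixes q :: real
  assumes "0 \<le> q" "q < 1" "x \<in> {0..1}" "y \<in> {0..1}"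
  shows "summable (\<lambda>n. q ^ n * (farey_phi n x - farey_phi n y))"
proof (rule summable_power_mult_bounded[OF assms(1,2)])
  show "\<bar>farey_phi n x - farey_phi n y\<bar> \<le> 1" for n
    using farey_phi_range[OF assms(3), of n] farey_phi_range[OF assms(4), of n] by auto
qed

lemma farey_gap_two_le:
  fixes q :: real
  assumes q: "0 \<le> q" "q < 1"
  shows "farey_gap q 2 \<le> 1"
proof -
  define f where "f n = q ^ n * (farey_phi n 1 - farey_phi n (1 / 2))" for n
  have "summable f"
    unfolding f_def using q by (intro summable_power_mult_farey_phi_diff) auto
  have f_Suc: "f (Suc n) = q * (q ^ n * (farey_phi n (1 / 2) - farey_phi (Suc n) (1 / 2)))" for n
    by (simp add: f_def farey_transfer_at_one del: funpow.simps) (simp add: farey_transfer_at_one)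
  have "\<And>n. farey_phi n (1 / 2) \<in> {0..1}"
    by (rule farey_phi_range) simp
  note telescope = power_mult_telescope[where a = "\<lambda>n. farey_phi n (1 / 2)", OF q this]
  have "(\<Sum>n. f (Suc n)) = q * (\<Sum>n. q ^ n * (farey_phi n (1 / 2) - farey_phi (Suc n) (1 / 2)))"
    unfolding f_Suc by (rule suminf_mult[OF telescope(1)])
  also have "\<dots> \<le> q * farey_phi 0 (1 / 2)"
    by (rule mult_left_mono[OF telescope(2) q(1)])
  finally have "(\<Sum>n. f (Suc n)) \<le> q * (1 / 2)"
    by (simp add: phi0_def)
  moreover have "f 0 = 1 / 2"
    by (simp add: f_def phi0_def)
  ultimately show ?thesis
    using suminf_split_head[OF \<open>summable f\<close>] q unfolding farey_gap_def f_def by simp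
qed

lemma farey_gap_Suc_le:
  fixes q k :: real
  assumes q: "0 \<le> q" "q < 1" and k: "1 \<le> k"
  shows "k * farey_gap q (k + 1) \<le> (k + 1) / k + (k + 1) * farey_gap q k"
proof -
  define a where "a n = farey_phi n (1 / k)" for n
  define b where "b n = farey_phi n (1 / (k + 1))" for n
  define c where "c n = farey_phi n 1" for n
  have args: "1 / k \<in> {0..1}" "1 / (k + 1) \<in> {0..1}" "k / (k + 1) \<in> {0..1}" "(1::real) \<in> {0..1}"
    using k by auto
  have gap_k: "(\<lambda>n. q ^ n * (c n - a n)) sums farey_gap q k"
    unfolding a_def c_def farey_gap_def
    using q args by (intro summable_sums summable_power_mult_farey_phi_diff) auto
  have gap_Suc_k: "(\<lambda>n. q ^ n * (c n - b n)) sums farey_gap q (k + 1)"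
    unfolding b_def c_def farey_gap_def
    using q args by (intro summable_sums summable_power_mult_farey_phi_diff) auto
  have "\<And>n. a n \<in> {0..1}"
    unfolding a_def using args by (intro farey_phi_range)
  note telescope = power_mult_telescope[where a = a, OF q this]
  define T where "T = (\<Sum>n. q ^ n * (a n - a (Suc n)))"
  have T: "(\<lambda>n. q ^ n * (a n - a (Suc n))) sums T" "T \<le> 1 / k"
    using telescope by (auto simp: T_def a_def phi0_def intro: summable_sums)
  have step: "k * (c n - b n) \<le> (k + 1) * (c n - a n) + (k + 1) * (a n - a (Suc n))" for n
    using farey_phi_Suc_at_inverse_le[OF k, of n] unfolding a_def b_def c_def by (simp add: algebra_simps)
  have "k * (q ^ n * (c n - b n)) \<le> (k + 1) * (q ^ n * (c n - a n)) + (k + 1) * (q ^ n * (a n - a (Suc n)))" for n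
    using mult_left_mono[OF step[of n], of "q ^ n"] q by (simp add: algebra_simps)
  moreover have "(\<lambda>n. k * (q ^ n * (c n - b n))) sums (k * farey_gap q (k + 1))"
    by (rule sums_mult[OF gap_Suc_k])
  moreover have "(\<lambda>n. (k + 1) * (q ^ n * (c n - a n)) + (k + 1) * (q ^ n * (a n - a (Suc n))))
      sums ((k + 1) * farey_gap q k + (k + 1) * T)"
    by (intro sums_add sums_mult gap_k T(1))
  ultimately have "k * farey_gap q (k + 1) \<le> (k + 1) * farey_gap q k + (k + 1) * T"
    by (rule sums_le)
  also have "\<dots> \<le> (k + 1) * farey_gap q k + (k + 1) / k"
    using mult_left_mono[OF T(2), of "k + 1"] k by simp
  finally show ?thesis
    by simp
qed

lemma farey_gap_le:
  fixes q :: real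
  assumes q: "0 \<le> q" "q < 1" and "2 \<le> N"
  shows "farey_gap q (real N) \<le> real N * (real N - 1) / 2"
  using assms(3)
proof (induction N rule: nat_induct_at_least)
  case base
  then show ?case
    using farey_gap_two_le[OF q] by simp
next
  case (Suc N)
  define k where "k = real N"
  have k: "2 \<le> k"
    using Suc by (simp add: k_def)
  have "farey_gap q k \<le> k * (k - 1) / 2"
    using Suc.IH by (simp add: k_def)
  then have "(k + 1) * farey_gap q k \<le> (k + 1) * (k * (k - 1) / 2)"
    using k by (intro mult_left_mono) auto
  then have "k * farey_gap q (k + 1) \<le> (k + 1) / k + (k + 1) * (k * (k - 1) / 2)"
    using farey_gap_Suc_le[OF q, of k] k by linarith
  also have "\<dots> \<le> k * ((k + 1) * k / 2)"
  proof -
    have "2 \<le> k * k"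
      using mult_mono[OF k k] k by simp
    then have "2 * (k + 1) \<le> k * k * (k + 1)"
      using k by (intro mult_right_mono) auto
    then have "(k + 1) / k \<le> (k + 1) * k / 2"
      using k by (simp add: field_simps)
    moreover have "k * ((k + 1) * k / 2) = (k + 1) * (k * (k - 1) / 2) + (k + 1) * k / 2"
      by (simp add: field_simps)
    ultimately show ?thesis
      by linarith
  qed
  finally have "farey_gap q (k + 1) \<le> (k + 1) * k / 2"
    using k by simp
  moreover have "real (Suc N) = k + 1"
    by (simp add: k_def)
  ultimately show ?case
    by (simp only:) simp
qed

theorem lemma2:
  fixes N :: nat and \<sigma> x :: real
  assumes "N \<ge> 2" and "\<sigma> > 0" and "x \<in> {1 / real N..1}"
  shows "\<bar>(\<Sum>n. exp (- real n / \<sigma>) * (farey_transfer ^^ n) phi0 x) - S_sigma N \<sigma>\<bar>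
           \<le> real N * (real N - 1) / 2"
proof -
  define q where "q = exp (- 1 / \<sigma>)"
  have q: "0 \<le> q" "q < 1"
    using assms(2) by (auto simp: q_def)
  have exp_eq: "exp (- real n / \<sigma>) = q ^ n" for n
    unfolding q_def by (simp flip: exp_of_nat_mult)
  have "1 / real N \<in> {0..1}" "x \<in> {0..1}"
    using assms by (auto intro: order_trans[of 0 "1 / real N"])
  then have "\<bar>(\<Sum>n. q ^ n * farey_phi n x) - (\<Sum>n. q ^ n * (farey_preimage_measure N n / ln (real N)))\<bar>
      \<le> farey_gap q (real N)"
    unfolding farey_gap_def using assms(3) farey_phi_range farey_preimage_measure_bounds[OF assms(1)]
    by (intro abs_suminf_power_mult_diff_le[OF q]) (auto intro: farey_phi_mono)
  also have "\<dots> \<le> real N * (real N - 1) / 2"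
    by (rule farey_gap_le[OF q assms(1)])
  finally show ?thesis
    unfolding exp_eq S_sigma_eq_suminf[OF assms(1,2), folded q_def] .
qed

end
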